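(* Suppose problem (P0-group) has a unique solution $v^*\in\mathbb{R}^M$. Suppose further that $x^*:=\nu^{-1}(v^* )\neq 0$ and that $y_i=(x^* )^TQ_ix^*$ for $i=1,\dots,N$. Then the solution set of problem (P0) is exactly $\{x^*,-x^*\}$.
   Context: Real setting. Let $n,N\ge 1$ and $M=n(n+1)/2$. Components of vectors in $\mathbb{R}^M$ are indexed by unordered pairs: for $1\le i,j\le n$ the symmetric index $ij$ ($=ji$) is $\sum_{k=1}^{\min\{i,j\}-1}(n-k+1)+|j-i|+1$. This is a bijection from unordered pairs $\{i,j\}$ (with $i=j$ allowed) onto $\{1,\dots,M\}$. The real Veronese map $\nu:\mathbb{R}^n\to\mathbb{R}^M$ is defined by $(\nu(x))_{ij}=x_ix_j$. For $j=1,\dots,n$, $W_j$ is the $n\times M$ binary matrix with $(W_j)_{k,l}=1$ if $l$ is the index $jk$ and $0$ otherwise. Thus $W_jv=(v_{j1},\dots,v_{jn})^T$, and in particular $W_j\nu(x)=x_jx$. $\|x\|_0$ is the number of nonzero entries of $x$. For vectors $u_1,\dots,u_n$, $\|\{u_j\}_{j=1}^n\|_0$ is the number of indices $j$ with $u_j\neq 0$. Data: vectors $q_1,\dots,q_N\in\mathbb{R}^n$, matrices $Q_i=q_iq_i^T$, and numbers $y_1,\dots,y_N\in\mathbb{R}$. The matrix $A\in\mathbb{R}^{N\times M}$ has entries $A_{i,jj}=q_{ij}^2$ and $A_{i,jk}=2q_{ij}q_{ik}$ for $j<k$, where $q_{ij}$ is the $j$-th entry of $q_i$. With this, $(q_i^Tx)^2=(A\nu(x))_i$.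 Inverse map $\nu^{-1}:\mathbb{R}^M\to\mathbb{R}^n$. Let $i$ be the smallest $j\in\{1,\dots,n\}$ with $v_{jj}>0$; if no such $j$ exists, set $i=0$. If $i>0$ and $v_{ji}^2/v_{ii}=v_{jj}$ for all $j=1,\dots,n$, then $\nu^{-1}(v)=\frac{1}{\sqrt{v_{ii}}}(v_{1i},v_{2i},\dots,v_{ni})^T$. Otherwise $\nu^{-1}(v)=0$. (P0): $\min_{x\in\mathbb{R}^n}\|x\|_0$ subject to $y_i=(q_i^Tx)^2=x^TQ_ix$ for $i=1,\dots,N$. (P0-group): $\min_{v\in\mathbb{R}^M}\|\{W_jv\}_{j=1}^n\|_0$ subject to $Av=y$ and $v_{jj}\ge 0$ for $j=1,\dots,n$. *)

theory Defs
  imports Complex_Main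
begin

text \<open>Vectors in R^n are represented as functions nat \<Rightarrow> real with components
  indexed by 1..n and all other components equal to 0.\<close>

definition vecs :: "nat \<Rightarrow> (nat \<Rightarrow> real) set" where
  "vecs n = {x. \<forall>i. i \<notin> {1..n} \<longrightarrow> x i = 0}"

definition Mdim :: "nat \<Rightarrow> nat" where
  "Mdim n = n * (n + 1) div 2"

definition sidx :: "nat \<Rightarrow> nat \<Rightarrow> nat \<Rightarrow> nat" where
  "sidx n i j = (\<Sum>k = 1..<min i j. n - k + 1) + nat \<bar>int j - int i\<bar> + 1"

definition pair_of :: "nat \<Rightarrow> nat \<Rightarrow> nat \<times> nat" where
  "pair_of n l = (SOME p. 1 \<le> fst p \<and> fst p \<le> snd p \<and> snd p \<le> n \<and> sidx n (fst p) (snd p) = l)"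

definition veronese :: "nat \<Rightarrow> (nat \<Rightarrow> real) \<Rightarrow> (nat \<Rightarrow> real)" where
  "veronese n x = (\<lambda>l. if l \<in> {1..Mdim n}
      then x (fst (pair_of n l)) * x (snd (pair_of n l)) else 0)"

definition Wmat :: "nat \<Rightarrow> nat \<Rightarrow> nat \<Rightarrow> nat \<Rightarrow> real" where
  "Wmat n j k l = (if l = sidx n j k then 1 else 0)"

definition Wapply :: "nat \<Rightarrow> nat \<Rightarrow> (nat \<Rightarrow> real) \<Rightarrow> (nat \<Rightarrow> real)" where
  "Wapply n j v = (\<lambda>k. if k \<in> {1..n} then (\<Sum>l = 1..Mdim n. Wmat n j k l * v l) else 0)"

definition l0 :: "nat \<Rightarrow> (nat \<Rightarrow> real) \<Rightarrow> nat" where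
  "l0 n x = card {i \<in> {1..n}. x i \<noteq> 0}"

definition l0_group :: "nat \<Rightarrow> (nat \<Rightarrow> real) \<Rightarrow> nat" where
  "l0_group n v = card {j \<in> {1..n}. \<exists>k \<in> {1..n}. Wapply n j v k \<noteq> 0}"

text \<open>Matrix A; q i j is the j-th entry of q_i.\<close>
definition Amat :: "nat \<Rightarrow> (nat \<Rightarrow> nat \<Rightarrow> real) \<Rightarrow> nat \<Rightarrow> nat \<Rightarrow> real" where
  "Amat n q i l = (let j = fst (pair_of n l); k = snd (pair_of n l) in
      if j = k then (q i j)\<^sup>2 else 2 * q i j * q i k)"

definition Aapply :: "nat \<Rightarrow> (nat \<Rightarrow> nat \<Rightarrow> real) \<Rightarrow> (nat \<Rightarrow> real) \<Rightarrow> nat \<Rightarrow> real" where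
  "Aapply n q v i = (\<Sum>l = 1..Mdim n. Amat n q i l * v l)"

text \<open>Quadratic form x^T Q_i x with Q_i = q_i q_i^T.\<close>
definition quadQ :: "nat \<Rightarrow> (nat \<Rightarrow> nat \<Rightarrow> real) \<Rightarrow> nat \<Rightarrow> (nat \<Rightarrow> real) \<Rightarrow> real" where
  "quadQ n q i x = (\<Sum>j = 1..n. \<Sum>k = 1..n. x j * (q i j * q i k) * x k)"

definition veronese_inv :: "nat \<Rightarrow> (nat \<Rightarrow> real) \<Rightarrow> (nat \<Rightarrow> real)" where
  "veronese_inv n v =
     (let vc = (\<lambda>i j. v (sidx n i j)) in
      if (\<exists>j \<in> {1..n}. vc j j > 0) then
        (let i = (LEAST j. j \<in> {1..n} \<and> vc j j > 0) in
          if (\<forall>j \<in> {1..n}. (vc j i)\<^sup>2 / vc i i = vc j j)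
          then (\<lambda>j. if j \<in> {1..n} then vc j i / sqrt (vc i i) else 0)
          else (\<lambda>_. 0))
      else (\<lambda>_. 0))"

definition feasible_P0 :: "nat \<Rightarrow> nat \<Rightarrow> (nat \<Rightarrow> nat \<Rightarrow> real) \<Rightarrow> (nat \<Rightarrow> real) \<Rightarrow> (nat \<Rightarrow> real) \<Rightarrow> bool" where
  "feasible_P0 n N q y x \<longleftrightarrow> x \<in> vecs n \<and>
     (\<forall>i \<in> {1..N}. y i = (\<Sum>j = 1..n. q i j * x j)\<^sup>2 \<and> y i = quadQ n q i x)"

definition sol_P0 :: "nat \<Rightarrow> nat \<Rightarrow> (nat \<Rightarrow> nat \<Rightarrow> real) \<Rightarrow> (nat \<Rightarrow> real) \<Rightarrow> (nat \<Rightarrow> real) \<Rightarrow> bool" where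
  "sol_P0 n N q y x \<longleftrightarrow> feasible_P0 n N q y x \<and>
     (\<forall>z. feasible_P0 n N q y z \<longrightarrow> l0 n x \<le> l0 n z)"

definition feasible_P0g :: "nat \<Rightarrow> nat \<Rightarrow> (nat \<Rightarrow> nat \<Rightarrow> real) \<Rightarrow> (nat \<Rightarrow> real) \<Rightarrow> (nat \<Rightarrow> real) \<Rightarrow> bool" where
  "feasible_P0g n N q y v \<longleftrightarrow> v \<in> vecs (Mdim n) \<and>
     (\<forall>i \<in> {1..N}. Aapply n q v i = y i) \<and>
     (\<forall>j \<in> {1..n}. v (sidx n j j) \<ge> 0)"

definition sol_P0g :: "nat \<Rightarrow> nat \<Rightarrow> (nat \<Rightarrow> nat \<Rightarrow> real) \<Rightarrow> (nat \<Rightarrow> real) \<Rightarrow> (nat \<Rightarrow> real) \<Rightarrow> bool" where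
  "sol_P0g n N q y v \<longleftrightarrow> feasible_P0g n N q y v \<and>
     (\<forall>w. feasible_P0g n N q y w \<longrightarrow> l0_group n v \<le> l0_group n w)"

end

theory Submission
  imports Defs
begin

(* Proof idea; v0 denotes the unique solution of (P0-group).  The Veronese
   map nu sends every feasible point x of (P0) to a feasible point nu(x) of
   (P0-group) with the same sparsity, because
   A nu(x) = ((q_i^T x)^2)_i, the diagonal entries x_j^2 are nonnegative and
   W_j nu(x) = x_j x vanishes exactly when x_j = 0.  Conversely x0 = nu^{-1}(v0)
   is feasible for (P0) by hypothesis, and its support is contained in the set
   of groups j with W_j v0 ~= 0.  Hence ||x0||_0 <= ||v0||_group <= ||z||_0 for
   every feasible z, so x0 and -x0 solve (P0).  If x solves (P0), the same chain
   shows that nu(x) solves (P0-group), so nu(x) = v0 = nu(x0) by uniqueness, and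
   nu is injective up to sign. *)

section \<open>The symmetric index as a bijection\<close>

text \<open>Index pairs (i,j) with 1 \<le> i \<le> j \<le> n; they parametrise the coordinates of R^M.\<close>
definition upper_pairs :: "nat \<Rightarrow> (nat \<times> nat) set" where
  "upper_pairs n = {(i,j). 1 \<le> i \<and> i \<le> j \<and> j \<le> n}"

text \<open>Number of coordinates occupied by the rows 1, ..., i-1 of the upper triangle.\<close>
definition row_offset :: "nat \<Rightarrow> nat \<Rightarrow> nat" where
  "row_offset n i = (\<Sum>k = 1..<i. n - k + 1)"

lemma sidx_sym: "sidx n i j = sidx n j i"
  unfolding sidx_def by (simp add: min.commute abs_minus_commute)

lemma sidx_le: "i \<le> j \<Longrightarrow> sidx n i j = row_offset n i + (j - i) + 1"
  unfolding sidx_def row_offset_def by (simp add: min_def nat_diff_distrib)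

lemma sidx_min_max: "sidx n j k = sidx n (min j k) (max j k)"
  by (cases "j \<le> k") (auto simp: min_def max_def sidx_sym)

lemma row_offset_Suc: "1 \<le> i \<Longrightarrow> row_offset n (Suc i) = row_offset n i + (n - i + 1)"
  unfolding row_offset_def by simp

lemma row_offset_mono: "i \<le> i' \<Longrightarrow> row_offset n i \<le> row_offset n i'"
  unfolding row_offset_def by (rule sum_mono2) auto

lemma row_offset_last: "row_offset n (Suc n) = Mdim n"
proof -
  have "2 * row_offset n (Suc n) = n * (n + 1)"
  proof (induction n)
    case 0 then show ?case by (simp add: row_offset_def)
  next
    case (Suc n)
    have "row_offset (Suc n) (Suc (Suc n)) = (\<Sum>k = 1..<Suc n. (n - k + 1) + 1) + 1"
      unfolding row_offset_def by (simp add: Suc_diff_le)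
    also have "\<dots> = row_offset n (Suc n) + n + 1"
      unfolding row_offset_def sum.distrib by simp
    finally show ?case using Suc by (simp add: algebra_simps)
  qed
  then show ?thesis unfolding Mdim_def by simp
qed

lemma sidx_range: "(i,j) \<in> upper_pairs n \<Longrightarrow> sidx n i j \<in> {1..Mdim n}"
proof -
  assume "(i,j) \<in> upper_pairs n"
  hence h: "1 \<le> i" "i \<le> j" "j \<le> n" by (auto simp: upper_pairs_def)
  have "sidx n i j \<le> row_offset n (Suc i)" using h by (simp add: sidx_le row_offset_Suc)
  also have "\<dots> \<le> row_offset n (Suc n)" using h by (intro row_offset_mono) simp
  finally show ?thesis using h by (simp add: sidx_le row_offset_last)
qed

lemma sidx_row_less:
  assumes "(i,j) \<in> upper_pairs n" "(i',j') \<in> upper_pairs n" "i < i'"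
  shows "sidx n i j < sidx n i' j'"
proof -
  have h: "1 \<le> i" "i \<le> j" "j \<le> n" "i' \<le> j'" using assms by (auto simp: upper_pairs_def)
  have "sidx n i j \<le> row_offset n (Suc i)" using h by (simp add: sidx_le row_offset_Suc)
  also have "\<dots> \<le> row_offset n i'" using assms(3) by (intro row_offset_mono) simp
  also have "\<dots> < sidx n i' j'" using h by (simp add: sidx_le)
  finally show ?thesis .
qed

lemma sidx_inj: "inj_on (\<lambda>p. sidx n (fst p) (snd p)) (upper_pairs n)"
proof (rule inj_onI)
  fix p p' assume a: "p \<in> upper_pairs n" "p' \<in> upper_pairs n"
    "sidx n (fst p) (snd p) = sidx n (fst p') (snd p')"
  obtain i j i' j' where p: "p = (i,j)" "p' = (i',j')" by fastforce
  have "i = i'" using sidx_row_less[of i j n i' j'] sidx_row_less[of i' j' n i j] a p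
    by (metis fst_conv linorder_neqE_nat nat_less_le snd_conv)
  then show "p = p'" using a p by (auto simp: sidx_le upper_pairs_def)
qed

lemma upper_pairs_0: "upper_pairs 0 = {}"
  unfolding upper_pairs_def by auto

lemma upper_pairs_Suc:
  "upper_pairs (Suc n) = upper_pairs n \<union> (\<lambda>i. (i, Suc n)) ` {1..Suc n}"
  "upper_pairs n \<inter> (\<lambda>i. (i, Suc n)) ` {1..Suc n} = {}"
  unfolding upper_pairs_def by auto

lemma upper_pairs_finite: "finite (upper_pairs n)"
  by (rule finite_subset[of _ "{1..n} \<times> {1..n}"]) (auto simp: upper_pairs_def)

lemma card_upper_pairs: "card (upper_pairs n) = Mdim n"
proof (induction n)
  case 0 then show ?case by (simp add: upper_pairs_0 Mdim_def)
next
  case (Suc n)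
  have "card (upper_pairs (Suc n)) = card (upper_pairs n) + card ((\<lambda>i. (i, Suc n)) ` {1..Suc n})"
    unfolding upper_pairs_Suc(1)
    by (rule card_Un_disjoint) (use upper_pairs_Suc(2) upper_pairs_finite in auto)
  also have "card ((\<lambda>i. (i, Suc n)) ` {1..Suc n}) = Suc n"
    by (subst card_image) (auto simp: inj_on_def)
  finally show ?case using Suc unfolding Mdim_def by simp
qed

lemma sidx_bij: "bij_betw (\<lambda>p. sidx n (fst p) (snd p)) (upper_pairs n) {1..Mdim n}"
proof -
  let ?s = "\<lambda>p. sidx n (fst p) (snd p)"
  have sub: "?s ` upper_pairs n \<subseteq> {1..Mdim n}" using sidx_range by auto
  have "card (?s ` upper_pairs n) = card {1..Mdim n}"
    using card_image[OF sidx_inj] card_upper_pairs by simp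
  hence "?s ` upper_pairs n = {1..Mdim n}" using card_subset_eq[OF _ sub] by simp
  thus ?thesis using sidx_inj by (simp add: bij_betw_def)
qed

lemma pair_of_sidx: "(i,j) \<in> upper_pairs n \<Longrightarrow> pair_of n (sidx n i j) = (i,j)"
proof -
  assume a: "(i,j) \<in> upper_pairs n"
  let ?P = "\<lambda>p. 1 \<le> fst p \<and> fst p \<le> snd p \<and> snd p \<le> n \<and> sidx n (fst p) (snd p) = sidx n i j"
  have "?P (i,j)" using a by (auto simp: upper_pairs_def)
  hence "?P (pair_of n (sidx n i j))" unfolding pair_of_def by (rule someI)
  hence "pair_of n (sidx n i j) \<in> upper_pairs n"
    "sidx n (fst (pair_of n (sidx n i j))) (snd (pair_of n (sidx n i j))) = sidx n (fst (i,j)) (snd (i,j))"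
    by (auto simp: upper_pairs_def case_prod_beta)
  thus ?thesis using sidx_inj[of n] a unfolding inj_on_def by blast
qed

section \<open>Coordinate formulas for nu, W_j and A\<close>

lemma veronese_sidx:
  "j \<in> {1..n} \<Longrightarrow> k \<in> {1..n} \<Longrightarrow> veronese n x (sidx n j k) = x j * x k"
proof -
  assume a: "j \<in> {1..n}" "k \<in> {1..n}"
  have m: "(min j k, max j k) \<in> upper_pairs n" using a by (auto simp: upper_pairs_def)
  show ?thesis unfolding sidx_min_max[of n j k] veronese_def
    using sidx_range[OF m] pair_of_sidx[OF m] by (cases "j \<le> k") (auto simp: min_def max_def)
qed

lemma Wapply_sidx: "k \<in> {1..n} \<Longrightarrow> j \<in> {1..n} \<Longrightarrow> Wapply n j v k = v (sidx n j k)"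
proof -
  assume a: "k \<in> {1..n}" "j \<in> {1..n}"
  have "(min j k, max j k) \<in> upper_pairs n" using a by (auto simp: upper_pairs_def)
  hence r: "sidx n j k \<in> {1..Mdim n}" using sidx_range sidx_min_max by metis
  have "(\<Sum>l = 1..Mdim n. Wmat n j k l * v l)
        = (\<Sum>l = 1..Mdim n. if sidx n j k = l then v (sidx n j k) else 0)"
    by (rule sum.cong) (auto simp: Wmat_def)
  also have "\<dots> = v (sidx n j k)" using r by (simp add: sum.delta)
  finally show ?thesis using a by (simp add: Wapply_def)
qed

lemma square_sum_upper_pairs:
  "(\<Sum>j = 1..n. (a::nat \<Rightarrow> real) j)\<^sup>2 =
     (\<Sum>p\<in>upper_pairs n. if fst p = snd p then (a (fst p))\<^sup>2 else 2 * a (fst p) * a (snd p))"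
  (is "_ = sum ?g (upper_pairs n)")
proof (induction n)
  case 0 then show ?case by (simp add: upper_pairs_0)
next
  case (Suc n)
  have "sum ?g (upper_pairs (Suc n)) = sum ?g (upper_pairs n) + sum ?g ((\<lambda>i. (i, Suc n)) ` {1..Suc n})"
    unfolding upper_pairs_Suc(1)
    by (rule sum.union_disjoint) (use upper_pairs_Suc(2) upper_pairs_finite in auto)
  also have "sum ?g ((\<lambda>i. (i, Suc n)) ` {1..Suc n}) = (\<Sum>i = 1..Suc n. ?g (i, Suc n))"
    by (subst sum.reindex) (auto simp: inj_on_def)
  also have "\<dots> = 2 * a (Suc n) * (\<Sum>i = 1..n. a i) + (a (Suc n))\<^sup>2"
    by (simp add: sum.cl_ivl_Suc sum_distrib_left algebra_simps)
  finally show ?case using Suc by (simp add: sum.cl_ivl_Suc power2_eq_square algebra_simps)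
qed

lemma Aapply_veronese: "Aapply n q (veronese n x) i = (\<Sum>j = 1..n. q i j * x j)\<^sup>2"
proof -
  let ?G = "\<lambda>p. (if fst p = snd p then (q i (fst p))\<^sup>2 else 2 * q i (fst p) * q i (snd p))
                * (x (fst p) * x (snd p))"
  have "Aapply n q (veronese n x) i = (\<Sum>l = 1..Mdim n. ?G (pair_of n l))"
    unfolding Aapply_def by (rule sum.cong) (auto simp: Amat_def veronese_def Let_def)
  also have "\<dots> = (\<Sum>p\<in>upper_pairs n. ?G (pair_of n (sidx n (fst p) (snd p))))"
    using sum.reindex_bij_betw[OF sidx_bij[of n], of "\<lambda>l. ?G (pair_of n l)"] by simp
  also have "\<dots> = (\<Sum>p\<in>upper_pairs n. ?G p)"
    by (rule sum.cong) (auto simp: pair_of_sidx)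
  also have "\<dots> = (\<Sum>j = 1..n. q i j * x j)\<^sup>2"
    unfolding square_sum_upper_pairs
    by (rule sum.cong) (auto simp: power2_eq_square algebra_simps)
  finally show ?thesis .
qed

text \<open>x^T Q_i x = (q_i^T x)^2, so the two constraints of (P0) coincide.\<close>
lemma quadQ_eq: "quadQ n q i x = (\<Sum>j = 1..n. q i j * x j)\<^sup>2"
  unfolding quadQ_def power2_eq_square sum_product by (simp add: algebra_simps)

section \<open>From (P0) to (P0-group)\<close>

lemma veronese_feasible:
  assumes "feasible_P0 n N q y x"
  shows "feasible_P0g n N q y (veronese n x)" and "l0_group n (veronese n x) = l0 n x"
proof -
  have "veronese n x \<in> vecs (Mdim n)" by (simp add: vecs_def veronese_def)
  then show "feasible_P0g n N q y (veronese n x)"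
    using assms unfolding feasible_P0_def feasible_P0g_def
    by (simp add: Aapply_veronese veronese_sidx)
  have "{j \<in> {1..n}. \<exists>k \<in> {1..n}. Wapply n j (veronese n x) k \<noteq> 0} = {j \<in> {1..n}. x j \<noteq> 0}"
    by (auto simp: Wapply_sidx veronese_sidx) (metis atLeastAtMost_iff)
  thus "l0_group n (veronese n x) = l0 n x" unfolding l0_group_def l0_def by simp
qed

lemma P0g_opt_le_l0:
  assumes "sol_P0g n N q y v" "feasible_P0 n N q y z"
  shows "l0_group n v \<le> l0 n z"
  using assms veronese_feasible unfolding sol_P0g_def by metis

lemma veronese_sol_P0g:
  assumes "sol_P0g n N q y v" "feasible_P0 n N q y x" "l0 n x \<le> l0_group n v"
  shows "sol_P0g n N q y (veronese n x)"
  using assms veronese_feasible unfolding sol_P0g_def by (metis le_trans)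

lemma feasible_P0_uminus: "feasible_P0 n N q y x \<Longrightarrow> feasible_P0 n N q y (- x)"
  unfolding feasible_P0_def vecs_def quadQ_eq by (simp add: sum_negf)

lemma l0_uminus: "l0 n (- x) = l0 n x"
  unfolding l0_def by simp

section \<open>The inverse Veronese map\<close>

lemma veronese_inv_column:
  assumes "veronese_inv n v \<noteq> (\<lambda>_. 0)"
  obtains i where "i \<in> {1..n}"
    "veronese_inv n v = (\<lambda>j. if j \<in> {1..n} then v (sidx n j i) / sqrt (v (sidx n i i)) else 0)"
proof -
  let ?P = "\<lambda>j. j \<in> {1..n} \<and> v (sidx n j j) > 0"
  have ex: "\<exists>j. ?P j" using assms unfolding veronese_inv_def by (auto simp: Let_def split: if_splits)
  have "?P (LEAST j. ?P j)" using LeastI_ex[OF ex] .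
  moreover have "veronese_inv n v =
      (\<lambda>j. if j \<in> {1..n} then v (sidx n j (LEAST j. ?P j)) / sqrt (v (sidx n (LEAST j. ?P j) (LEAST j. ?P j))) else 0)"
    using assms ex unfolding veronese_inv_def Let_def by (auto split: if_splits)
  ultimately show ?thesis using that by blast
qed

lemma l0_veronese_inv_le: "l0 n (veronese_inv n v) \<le> l0_group n v"
proof (cases "veronese_inv n v = (\<lambda>_. 0)")
  case True then show ?thesis by (simp add: l0_def)
next
  case False
  then obtain i where i: "i \<in> {1..n}" and col:
    "veronese_inv n v = (\<lambda>j. if j \<in> {1..n} then v (sidx n j i) / sqrt (v (sidx n i i)) else 0)"
    by (rule veronese_inv_column)
  have "{j \<in> {1..n}. veronese_inv n v j \<noteq> 0} \<subseteq> {j \<in> {1..n}. \<exists>k \<in> {1..n}. Wapply n j v k \<noteq> 0}"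
    using i by (auto simp: col Wapply_sidx) (metis atLeastAtMost_iff)
  thus ?thesis unfolding l0_def l0_group_def by (intro card_mono) auto
qed

lemma veronese_inv_vecs: "veronese_inv n v \<in> vecs n"
  unfolding veronese_inv_def vecs_def Let_def by auto

section \<open>nu is injective up to sign\<close>

lemma veronese_eq_sign:
  assumes "x \<in> vecs n" "z \<in> vecs n" "veronese n x = veronese n z"
  shows "x = z \<or> x = - z"
proof -
  have prod: "x j * x k = z j * z k" if "j \<in> {1..n}" "k \<in> {1..n}" for j k
    using arg_cong[OF assms(3), of "\<lambda>f. f (sidx n j k)"] that by (simp add: veronese_sidx)
  have outside: "x j = 0" "z j = 0" if "j \<notin> {1..n}" for j
    using assms(1,2) that unfolding vecs_def by auto
  show ?thesis
  proof (cases "\<exists>k \<in> {1..n}. z k \<noteq> 0")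
    case False
    have "x j = z j" for j
      using prod[of j j] outside[of j] False by (cases "j \<in> {1..n}") auto
    then show ?thesis by auto
  next
    case True
    then obtain k where k: "k \<in> {1..n}" "z k \<noteq> 0" by blast
    have "(x k)\<^sup>2 = (z k)\<^sup>2" using prod[OF k(1) k(1)] by (simp add: power2_eq_square)
    then obtain s :: real where s: "s = 1 \<or> s = -1" "x k = s * z k"
      by (metis mult_minus_left mult_1 power2_eq_iff)
    have "x j = s * z j" for j
    proof (cases "j \<in> {1..n}")
      case True
      have "x j * z k = s * z j * z k" using prod[OF True k(1)] s by (auto simp: algebra_simps)
      then show ?thesis using k(2) by simp
    qed (simp add: outside)
    then show ?thesis using s(1) by auto
  qed
qed

theorem theorem1:
  fixes n N :: nat and q :: "nat \<Rightarrow> nat \<Rightarrow> real" and y vstar :: "nat \<Rightarrow> real"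
  assumes "n \<ge> 1" and "N \<ge> 1"
    and "\<forall>v. sol_P0g n N q y v \<longleftrightarrow> v = vstar"
    and "veronese_inv n vstar \<noteq> (\<lambda>_. 0)"
    and "\<forall>i \<in> {1..N}. y i = quadQ n q i (veronese_inv n vstar)"
  shows "{x. sol_P0 n N q y x} = {veronese_inv n vstar, - veronese_inv n vstar}"
proof -
  define xs where "xs = veronese_inv n vstar"
  have vsol: "sol_P0g n N q y vstar" using assms(3) by simp
  have feas: "feasible_P0 n N q y xs"
    using veronese_inv_vecs assms(5) unfolding feasible_P0_def xs_def by (simp add: quadQ_eq)
  have xs_le: "l0 n xs \<le> l0_group n vstar"
    unfolding xs_def by (rule l0_veronese_inv_le)
  have bound: "l0 n xs \<le> l0 n z" if "feasible_P0 n N q y z" for z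
    using P0g_opt_le_l0[OF vsol that] xs_le by simp
  have sols: "sol_P0 n N q y xs" "sol_P0 n N q y (- xs)"
    using feas feasible_P0_uminus bound l0_uminus unfolding sol_P0_def by metis+
  have "x = xs \<or> x = - xs" if "sol_P0 n N q y x" for x
  proof -
    have "feasible_P0 n N q y x" "l0 n x \<le> l0 n xs"
      using that feas unfolding sol_P0_def by auto
    then have "veronese n x = vstar" "veronese n xs = vstar"
      using veronese_sol_P0g[OF vsol] feas xs_le assms(3) by (meson le_trans order_refl)+
    then show ?thesis
      using veronese_eq_sign \<open>feasible_P0 n N q y x\<close> feas unfolding feasible_P0_def by metis
  qed
  then show ?thesis using sols unfolding xs_def by auto
qed

end
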